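(* Consider the waning-immunity model described in the context. There exists $\delta_o>0$ (depending on the other parameters) such that for all $0\le\delta\le\delta_o$: if $(\omega_n+\mu)(\mu+r)>\beta_0\omega_n+\beta_n\mu$, then the system has no realistic endemic equilibrium (i.e. no equilibrium with $I^*\in(0,1]$); and if $(\omega_n+\mu)(\mu+r)<\beta_0\omega_n+\beta_n\mu$, then the system has exactly one endemic equilibrium with $I^*\in(0,1]$.
   Context: Model: Fix an integer $n\ge 1$ and parameters $\delta\ge 0$ (rate of waning immunity), $\omega\ge 0$ (vaccination rate), $r>0$ (recovery rate), $\mu>0$ (birth = death rate), coverages $p_0=0$, $p_1,\dots,p_n\in[0,1]$, and transmission rates $0\le\beta_0\le\beta_1\le\dots\le\beta_n$ with $\beta_0<\beta_n$. Write $\omega_i=p_i\omega$, $\delta_i=(1-p_i)\delta$ (so $\delta_0=\delta$). The ODE system for $(S_0,\dots,S_n,I)$ is $$S_0'=\sum_{i=1}^n\omega_iS_i-\delta S_0+rI-\beta_0IS_0-\mu S_0,$$ $$S_i'=-\omega_iS_i+\delta_{i-1}S_{i-1}-\delta_iS_i-\beta_iIS_i-\mu S_i\quad(1\le i\le n-1),$$ $$S_n'=\mu-\omega_nS_n+\delta_{n-1}S_{n-1}-\beta_nIS_n-\mu S_n,$$ $$I'=I\sum_{i=0}^n\beta_iS_i-rI-\mu I,$$ with the normalization $\sum_iS_i+I=1$. An endemic equilibrium is an equilibrium $(S_0^*,\dots,S_n^*,I^* )$ of this system satisfying the normalization with $I^*\neq0$. *)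

theory Defs
  imports Complex_Main
begin

text \<open>Compartments S_0..S_n are given by a function
  S :: nat => real (only indices 0..n matter). The vaccination rate of class i is
  omega_i = p i * omega, the waning rate is delta_i = (1 - p i) * delta.\<close>

definition wi_equilibrium ::
  "nat \<Rightarrow> real \<Rightarrow> real \<Rightarrow> real \<Rightarrow> real \<Rightarrow> (nat \<Rightarrow> real) \<Rightarrow> (nat \<Rightarrow> real)
     \<Rightarrow> (nat \<Rightarrow> real) \<Rightarrow> real \<Rightarrow> bool" where
  "wi_equilibrium n \<delta> \<omega> r \<mu> p \<beta> S I \<longleftrightarrow>
     (\<Sum>i\<le>n. S i) + I = 1 \<and>
     (\<Sum>i=1..n. p i * \<omega> * S i) - \<delta> * S 0 + r * I - \<beta> 0 * I * S 0 - \<mu> * S 0 = 0 \<and>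
     (\<forall>i. 1 \<le> i \<and> i \<le> n - 1 \<longrightarrow>
        - (p i * \<omega>) * S i + (1 - p (i - 1)) * \<delta> * S (i - 1) - (1 - p i) * \<delta> * S i
        - \<beta> i * I * S i - \<mu> * S i = 0) \<and>
     \<mu> - p n * \<omega> * S n + (1 - p (n - 1)) * \<delta> * S (n - 1) - \<beta> n * I * S n - \<mu> * S n = 0 \<and>
     I * (\<Sum>i\<le>n. \<beta> i * S i) - r * I - \<mu> * I = 0"

definition wi_endemic_equilibrium ::
  "nat \<Rightarrow> real \<Rightarrow> real \<Rightarrow> real \<Rightarrow> real \<Rightarrow> (nat \<Rightarrow> real) \<Rightarrow> (nat \<Rightarrow> real)
     \<Rightarrow> (nat \<Rightarrow> real) \<Rightarrow> real \<Rightarrow> bool" where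
  "wi_endemic_equilibrium n \<delta> \<omega> r \<mu> p \<beta> S I \<longleftrightarrow>
     wi_equilibrium n \<delta> \<omega> r \<mu> p \<beta> S I \<and> I \<noteq> 0"

end

theory Submission
  imports Defs
begin

text \<open>For \<open>\<delta> = 0\<close> the waning flows vanish, so at an equilibrium with infection level \<open>I\<close> the
  classes \<open>S\<^sub>1, ..., S\<^sub>n\<^sub>-\<^sub>1\<close> are empty, \<open>S\<^sub>n = \<mu> / (\<omega>\<^sub>n + \<beta>\<^sub>n I + \<mu>)\<close>,
  \<open>S\<^sub>0 = 1 - I - S\<^sub>n\<close>, and the force of infection \<open>\<Sum> \<beta>\<^sub>i S\<^sub>i\<close> equals
  \<open>f(I) = \<beta>\<^sub>0 (1 - I) + (\<beta>\<^sub>n - \<beta>\<^sub>0) \<mu> / (\<omega>\<^sub>n + \<beta>\<^sub>n I + \<mu>)\<close>. This function is strictly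
  decreasing with \<open>f(0) = (\<beta>\<^sub>0 \<omega>\<^sub>n + \<beta>\<^sub>n \<mu>) / (\<omega>\<^sub>n + \<mu>)\<close>, and endemic equilibria
  are the roots of \<open>f(I) = r + \<mu>\<close>; the threshold condition compares \<open>f(0)\<close> with \<open>r + \<mu>\<close>.

  For \<open>\<delta> > 0\<close> the equations of \<open>S\<^sub>1, ..., S\<^sub>n\<close> and the normalization still determine the
  classes from \<open>I\<close>, and the \<open>S\<^sub>0\<close> equation is redundant. A discrete Gronwall estimate along
  the chain \<open>S\<^sub>0 \<rightarrow> S\<^sub>1 \<rightarrow> ... \<rightarrow> S\<^sub>n\<^sub>-\<^sub>1\<close> shows that the force differs from \<open>f(I)\<close>
  by \<open>O(\<delta>)\<close>, with a Lipschitz constant \<open>O(\<delta>)\<close> in \<open>I\<close>. Hence for small \<open>\<delta>\<close> the force is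
  still strictly decreasing in \<open>I\<close>, which gives nonexistence, existence (intermediate value
  theorem) and uniqueness.\<close>

lemma chain_step_sum_le:
  fixes a x y :: "nat \<Rightarrow> real" and \<mu> :: real
  assumes "\<And>i. 1 \<le> i \<Longrightarrow> i \<le> m \<Longrightarrow> (a i + \<mu>) * x i \<le> a (i - 1) * x (i - 1) + y i"
  shows "\<mu> * (\<Sum>i=1..m. x i) + a m * x m \<le> a 0 * x 0 + (\<Sum>i=1..m. y i)"
  using assms
proof (induction m)
  case 0
  then show ?case by simp
next
  case (Suc m)
  then have "\<mu> * (\<Sum>i=1..m. x i) + a m * x m \<le> a 0 * x 0 + (\<Sum>i=1..m. y i)"
    by simp
  moreover have "(a (Suc m) + \<mu>) * x (Suc m) \<le> a m * x m + y (Suc m)"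
    using Suc.prems[of "Suc m"] by simp
  ultimately show ?case by (simp add: algebra_simps)
qed

lemma sum_atMost_split_ends:
  fixes f :: "nat \<Rightarrow> 'a::comm_monoid_add"
  assumes "1 \<le> n"
  shows "(\<Sum>i\<le>n. f i) = f 0 + (\<Sum>i\<in>{1..<n}. f i) + f n"
proof -
  have "{..n} = insert 0 (insert n {1..<n})" using assms by auto
  then show ?thesis using assms by (simp add: add.commute add.left_commute)
qed

lemma eventually_nhds_0_mult_less:
  fixes c K :: real
  assumes "0 < c"
  shows "\<forall>\<^sub>F \<delta> in nhds 0. \<delta> * K < c"
proof -
  have "((\<lambda>\<delta>. \<delta> * K) \<longlongrightarrow> 0 * K) (nhds 0)"
    by (intro tendsto_intros filterlim_ident)
  from order_tendstoD(2)[OF this] show ?thesis using assms by simp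
qed

lemma eventually_nhds_0_imp_interval:
  fixes P :: "real \<Rightarrow> bool"
  assumes "\<forall>\<^sub>F \<delta> in nhds 0. 0 \<le> \<delta> \<longrightarrow> P \<delta>"
  shows "\<exists>\<delta>o>0. \<forall>\<delta>. 0 \<le> \<delta> \<and> \<delta> \<le> \<delta>o \<longrightarrow> P \<delta>"
proof -
  obtain e where "0 < e" and e: "\<And>\<delta>. dist \<delta> 0 < e \<Longrightarrow> 0 \<le> \<delta> \<longrightarrow> P \<delta>"
    using assms unfolding eventually_nhds_metric by blast
  show ?thesis
  proof (intro exI[of _ "e / 2"] conjI allI impI)
    show "0 < e / 2" using \<open>0 < e\<close> by simp
    fix \<delta> :: real assume "0 \<le> \<delta> \<and> \<delta> \<le> e / 2"
    then show "P \<delta>" using e \<open>0 < e\<close> by (simp add: dist_real_def)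
  qed
qed

locale wi_model =
  fixes n :: nat and \<omega> r \<mu> :: real and p \<beta> :: "nat \<Rightarrow> real"
  assumes n_pos: "n \<ge> 1" and \<omega>_nonneg: "\<omega> \<ge> 0" and r_pos: "r > 0" and \<mu>_pos: "\<mu> > 0"
    and p_0: "p 0 = 0" and p_range: "\<forall>i\<in>{1..n}. 0 \<le> p i \<and> p i \<le> 1"
    and \<beta>_0_nonneg: "0 \<le> \<beta> 0" and \<beta>_mono: "\<forall>i<n. \<beta> i \<le> \<beta> (Suc i)" and \<beta>_0_less: "\<beta> 0 < \<beta> n"
begin

lemma p_bounds: "i \<le> n \<Longrightarrow> 0 \<le> p i \<and> p i \<le> 1"
  using p_range p_0 by (cases "i = 0") auto

lemma \<beta>_mono_le: "i \<le> j \<Longrightarrow> j \<le> n \<Longrightarrow> \<beta> i \<le> \<beta> j"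
proof (induction j rule: dec_induct)
  case (step k)
  then show ?case using \<beta>_mono by (meson Suc_leD Suc_le_lessD order_trans)
qed simp

lemma \<beta>_bounds: "i \<le> n \<Longrightarrow> \<beta> 0 \<le> \<beta> i \<and> \<beta> i \<le> \<beta> n"
  using \<beta>_mono_le by simp

lemma \<beta>_n_pos: "0 < \<beta> n"
  using \<beta>_0_nonneg \<beta>_0_less by linarith

lemma \<omega>_n_nonneg: "0 \<le> p n * \<omega>"
  using p_bounds[of n] \<omega>_nonneg by simp

abbreviation mid_sum :: "(nat \<Rightarrow> real) \<Rightarrow> real" where
  "mid_sum g \<equiv> \<Sum>i\<in>{1..<n}. g i"

definition force :: "(nat \<Rightarrow> real) \<Rightarrow> real" where
  "force S = (\<Sum>i\<le>n. \<beta> i * S i)"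

definition denom :: "real \<Rightarrow> real" where
  "denom I = p n * \<omega> + \<beta> n * I + \<mu>"

text \<open>The force of infection of the \<open>\<delta> = 0\<close> equilibrium with infection level \<open>I\<close>, where
  \<open>S\<^sub>1, ..., S\<^sub>n\<^sub>-\<^sub>1\<close> vanish, \<open>S\<^sub>n = \<mu> / denom I\<close> and \<open>S\<^sub>0 = 1 - I - S\<^sub>n\<close>.\<close>

definition limit_force :: "real \<Rightarrow> real" where
  "limit_force I = \<beta> 0 * (1 - I) + (\<beta> n - \<beta> 0) * \<mu> / denom I"

definition limit_slope :: real where
  "limit_slope = \<beta> 0 + (\<beta> n - \<beta> 0) * \<beta> n * \<mu> / (p n * \<omega> + \<beta> n + \<mu>)\<^sup>2"

definition deviation_lip :: real where
  "deviation_lip = \<beta> n * (2 * \<mu> + 7 * \<beta> n) / \<mu>\<^sup>2"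

lemma denom_ge: "0 \<le> I \<Longrightarrow> \<mu> \<le> denom I"
  unfolding denom_def using \<omega>_n_nonneg \<beta>_n_pos by simp

lemma denom_pos: "0 \<le> I \<Longrightarrow> 0 < denom I"
  using denom_ge \<mu>_pos by (meson less_le_trans)

lemma abs_divide_denom_le:
  assumes "0 \<le> I"
  shows "\<bar>x / denom I\<bar> \<le> \<bar>x\<bar> / \<mu>"
proof -
  have "\<bar>x / denom I\<bar> = \<bar>x\<bar> / denom I" using denom_pos[OF assms] by simp
  also have "\<dots> \<le> \<bar>x\<bar> / \<mu>" using denom_ge[OF assms] \<mu>_pos by (intro divide_left_mono) auto
  finally show ?thesis .
qed

lemma force_split:
  "force S = \<beta> 0 * (\<Sum>i\<le>n. S i) + mid_sum (\<lambda>i. (\<beta> i - \<beta> 0) * S i) + (\<beta> n - \<beta> 0) * S n"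
proof -
  have "force S = \<beta> 0 * (\<Sum>i\<le>n. S i) + (\<Sum>i\<le>n. (\<beta> i - \<beta> 0) * S i)"
    unfolding force_def by (simp add: sum_distrib_left sum.distrib[symmetric] algebra_simps)
  then show ?thesis
    using sum_atMost_split_ends[OF n_pos, of "\<lambda>i. (\<beta> i - \<beta> 0) * S i"] by simp
qed

lemma mid_sum_weighted_le:
  "\<bar>mid_sum (\<lambda>i. (\<beta> i - \<beta> 0) * g i)\<bar> \<le> \<beta> n * mid_sum (\<lambda>i. \<bar>g i\<bar>)"
proof -
  have "\<bar>mid_sum (\<lambda>i. (\<beta> i - \<beta> 0) * g i)\<bar> \<le> mid_sum (\<lambda>i. \<bar>(\<beta> i - \<beta> 0) * g i\<bar>)"
    by (rule sum_abs)
  also have "\<dots> \<le> mid_sum (\<lambda>i. \<beta> n * \<bar>g i\<bar>)"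
  proof (rule sum_mono)
    fix i assume "i \<in> {1..<n}"
    then have "0 \<le> \<beta> i - \<beta> 0" "\<beta> i - \<beta> 0 \<le> \<beta> n"
      using \<beta>_bounds[of i] \<beta>_0_nonneg by auto
    then show "\<bar>(\<beta> i - \<beta> 0) * g i\<bar> \<le> \<beta> n * \<bar>g i\<bar>"
      by (simp add: abs_mult mult_right_mono)
  qed
  finally show ?thesis by (simp add: sum_distrib_left)
qed

lemma divide_denom_diff:
  assumes "0 \<le> I" "0 \<le> I'"
  shows "x / denom I - x / denom I' = x * \<beta> n * (I' - I) / (denom I * denom I')"
proof -
  have "denom I \<noteq> 0" "denom I' \<noteq> 0"
    using denom_pos assms by (simp_all add: less_imp_neq[symmetric])
  then have "x / denom I - x / denom I' = x * (denom I' - denom I) / (denom I * denom I')"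
    by (simp add: diff_frac_eq algebra_simps)
  also have "denom I' - denom I = \<beta> n * (I' - I)"
    unfolding denom_def by (simp add: algebra_simps)
  finally show ?thesis by (simp add: mult.assoc)
qed

lemma limit_force_diff:
  assumes "0 \<le> I" "0 \<le> I'"
  shows "limit_force I - limit_force I'
    = (I' - I) * (\<beta> 0 + (\<beta> n - \<beta> 0) * \<beta> n * \<mu> / (denom I * denom I'))"
proof -
  have "limit_force I - limit_force I'
      = \<beta> 0 * (I' - I) + (\<beta> n - \<beta> 0) * (\<mu> / denom I - \<mu> / denom I')"
    unfolding limit_force_def by (simp add: algebra_simps)
  also have "\<dots> = (I' - I) * (\<beta> 0 + (\<beta> n - \<beta> 0) * \<beta> n * \<mu> / (denom I * denom I'))"
    unfolding divide_denom_diff[OF assms] by (simp add: algebra_simps)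
  finally show ?thesis .
qed

lemma limit_force_antimono:
  assumes "0 \<le> I" "I \<le> I'"
  shows "limit_force I' \<le> limit_force I"
proof -
  have "0 \<le> (I' - I) * (\<beta> 0 + (\<beta> n - \<beta> 0) * \<beta> n * \<mu> / (denom I * denom I'))"
    using assms denom_pos[of I] denom_pos[of I'] \<beta>_0_nonneg \<beta>_0_less \<beta>_n_pos \<mu>_pos
    by (intro mult_nonneg_nonneg add_nonneg_nonneg divide_nonneg_pos mult_pos_pos) auto
  then show ?thesis using limit_force_diff[of I I'] assms by simp
qed

lemma limit_slope_pos: "0 < limit_slope"
  unfolding limit_slope_def using \<beta>_0_nonneg \<beta>_0_less \<beta>_n_pos \<mu>_pos \<omega>_n_nonneg
  by (intro add_nonneg_pos divide_pos_pos mult_pos_pos) auto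

lemma limit_force_slope:
  assumes "0 \<le> I" "I \<le> 1" "0 \<le> I'" "I' \<le> 1"
  shows "limit_slope * \<bar>I' - I\<bar> \<le> \<bar>limit_force I' - limit_force I\<bar>"
proof -
  define E where "E = p n * \<omega> + \<beta> n + \<mu>"
  have E_pos: "0 < E" unfolding E_def using \<omega>_n_nonneg \<beta>_n_pos \<mu>_pos by simp
  have DD: "denom I * denom I' \<le> E\<^sup>2"
    using assms denom_pos[of I] denom_pos[of I'] \<beta>_n_pos \<omega>_n_nonneg \<mu>_pos
    unfolding E_def power2_eq_square by (intro mult_mono) (auto simp: denom_def)
  have "(\<beta> n - \<beta> 0) * \<beta> n * \<mu> / E\<^sup>2 \<le> (\<beta> n - \<beta> 0) * \<beta> n * \<mu> / (denom I * denom I')"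
    using DD denom_pos[of I] denom_pos[of I'] assms \<beta>_0_less \<beta>_n_pos \<mu>_pos E_pos
    by (intro divide_left_mono) auto
  then have "limit_slope \<le> \<beta> 0 + (\<beta> n - \<beta> 0) * \<beta> n * \<mu> / (denom I * denom I')"
    unfolding limit_slope_def E_def by simp
  then have "limit_slope * \<bar>I' - I\<bar> \<le> \<bar>I' - I\<bar> * (\<beta> 0 + (\<beta> n - \<beta> 0) * \<beta> n * \<mu> / (denom I * denom I'))"
    by (simp add: mult.commute mult_left_mono)
  also have "\<dots> = \<bar>limit_force I' - limit_force I\<bar>"
    using limit_force_diff[OF assms(1,3)] limit_slope_pos \<open>limit_slope \<le> _\<close>
    by (simp add: abs_mult abs_minus_commute)
  finally show ?thesis .
qed

lemma limit_force_1_le: "limit_force 1 \<le> \<mu>"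
proof -
  have "(\<beta> n - \<beta> 0) * \<mu> \<le> denom 1 * \<mu>"
    using \<omega>_n_nonneg \<beta>_0_nonneg \<mu>_pos unfolding denom_def by (intro mult_right_mono) auto
  then show ?thesis
    unfolding limit_force_def using denom_pos[of 1] by (simp add: divide_le_eq mult.commute)
qed

lemma limit_force_0: "limit_force 0 = (\<beta> 0 * (p n * \<omega>) + \<beta> n * \<mu>) / (p n * \<omega> + \<mu>)"
proof -
  have D: "denom 0 = p n * \<omega> + \<mu>" unfolding denom_def by simp
  have "limit_force 0 = (\<beta> 0 * (p n * \<omega> + \<mu>) + (\<beta> n - \<beta> 0) * \<mu>) / (p n * \<omega> + \<mu>)"
    unfolding limit_force_def D using denom_pos[of 0] D by (simp add: add_divide_eq_iff)
  then show ?thesis by (simp add: algebra_simps)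
qed

lemma threshold_iff:
  shows "(p n * \<omega> + \<mu>) * (\<mu> + r) > \<beta> 0 * (p n * \<omega>) + \<beta> n * \<mu> \<longleftrightarrow> limit_force 0 < r + \<mu>"
    and "(p n * \<omega> + \<mu>) * (\<mu> + r) < \<beta> 0 * (p n * \<omega>) + \<beta> n * \<mu> \<longleftrightarrow> r + \<mu> < limit_force 0"
proof -
  have pos: "0 < p n * \<omega> + \<mu>" using \<omega>_n_nonneg \<mu>_pos by linarith
  show "(p n * \<omega> + \<mu>) * (\<mu> + r) > \<beta> 0 * (p n * \<omega>) + \<beta> n * \<mu> \<longleftrightarrow> limit_force 0 < r + \<mu>"
    unfolding limit_force_0 pos_divide_less_eq[OF pos] by (simp only: mult.commute add.commute)
  show "(p n * \<omega> + \<mu>) * (\<mu> + r) < \<beta> 0 * (p n * \<omega>) + \<beta> n * \<mu> \<longleftrightarrow> r + \<mu> < limit_force 0"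
    unfolding limit_force_0 pos_less_divide_eq[OF pos] by (simp only: mult.commute add.commute)
qed

end

locale wi_small_waning = wi_model +
  fixes \<delta> :: real
  assumes \<delta>_nonneg: "0 \<le> \<delta>" and \<delta>_small: "\<delta> \<le> \<mu> / 4"
begin

definition chain_balance :: "(nat \<Rightarrow> real) \<Rightarrow> real \<Rightarrow> bool" where
  "chain_balance S I \<longleftrightarrow> (\<forall>i. 1 \<le> i \<and> i \<le> n - 1 \<longrightarrow>
     - (p i * \<omega>) * S i + (1 - p (i - 1)) * \<delta> * S (i - 1) - (1 - p i) * \<delta> * S i
     - \<beta> i * I * S i - \<mu> * S i = 0)"

definition class_balance :: "(nat \<Rightarrow> real) \<Rightarrow> real \<Rightarrow> bool" where
  "class_balance S I \<longleftrightarrow> (\<Sum>i\<le>n. S i) + I = 1 \<and> chain_balance S I \<and>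
     \<mu> - p n * \<omega> * S n + (1 - p (n - 1)) * \<delta> * S (n - 1) - \<beta> n * I * S n - \<mu> * S n = 0"

definition inflow :: "(nat \<Rightarrow> real) \<Rightarrow> real" where
  "inflow S = (1 - p (n - 1)) * \<delta> * S (n - 1)"

definition exit_rate :: "real \<Rightarrow> nat \<Rightarrow> real" where
  "exit_rate I i = p i * \<omega> + (1 - p i) * \<delta> + \<beta> i * I + \<mu>"

lemma waning_nonneg: "i \<le> n \<Longrightarrow> 0 \<le> (1 - p i) * \<delta>"
  using p_bounds[of i] \<delta>_nonneg by simp

lemma exit_rate_ge:
  assumes "0 \<le> I" "i \<le> n"
  shows "(1 - p i) * \<delta> + \<mu> \<le> exit_rate I i"
proof -
  have "0 \<le> p i * \<omega>" "0 \<le> \<beta> i * I"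
    using p_bounds[OF assms(2)] \<beta>_bounds[OF assms(2)] \<beta>_0_nonneg \<omega>_nonneg assms(1) by simp_all
  then show ?thesis unfolding exit_rate_def by simp
qed

lemma exit_rate_pos: "0 \<le> I \<Longrightarrow> i \<le> n \<Longrightarrow> 0 < exit_rate I i"
  using exit_rate_ge waning_nonneg \<mu>_pos by (meson add_nonneg_pos less_le_trans)

lemma chain_balance_iff:
  "chain_balance S I \<longleftrightarrow>
     (\<forall>i. 1 \<le> i \<and> i \<le> n - 1 \<longrightarrow> exit_rate I i * S i = (1 - p (i - 1)) * \<delta> * S (i - 1))"
  unfolding chain_balance_def exit_rate_def by (auto simp: algebra_simps)

lemma chain_balance_diff_step:
  assumes S: "chain_balance S I" and S': "chain_balance S' I'" and I: "0 \<le> I"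
    and i: "1 \<le> i" "i \<le> n - 1"
  shows "((1 - p i) * \<delta> + \<mu>) * \<bar>S' i - S i\<bar>
    \<le> (1 - p (i - 1)) * \<delta> * \<bar>S' (i - 1) - S (i - 1)\<bar> + \<beta> n * \<bar>I' - I\<bar> * \<bar>S' i\<bar>"
proof -
  have i_le: "i \<le> n" using i by simp
  define a where "a = (1 - p (i - 1)) * \<delta>"
  have a_nonneg: "0 \<le> a" using waning_nonneg[of "i - 1"] i_le unfolding a_def by simp
  have e: "exit_rate I i * S i = a * S (i - 1)" "exit_rate I' i * S' i = a * S' (i - 1)"
    using S S' i unfolding chain_balance_iff a_def by simp_all
  have "exit_rate I' i = exit_rate I i + \<beta> i * (I' - I)"
    unfolding exit_rate_def by (simp add: algebra_simps)
  then have diff: "exit_rate I i * (S' i - S i) = a * (S' (i - 1) - S (i - 1)) - \<beta> i * (I' - I) * S' i"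
    using e by algebra
  have "((1 - p i) * \<delta> + \<mu>) * \<bar>S' i - S i\<bar> \<le> exit_rate I i * \<bar>S' i - S i\<bar>"
    using exit_rate_ge[OF I i_le] by (intro mult_right_mono) auto
  also have "\<dots> = \<bar>a * (S' (i - 1) - S (i - 1)) - \<beta> i * (I' - I) * S' i\<bar>"
    using exit_rate_pos[OF I i_le] unfolding diff[symmetric] by (simp add: abs_mult)
  also have "\<dots> \<le> a * \<bar>S' (i - 1) - S (i - 1)\<bar> + \<bar>\<beta> i\<bar> * \<bar>I' - I\<bar> * \<bar>S' i\<bar>"
    using abs_triangle_ineq4[of "a * (S' (i - 1) - S (i - 1))" "\<beta> i * (I' - I) * S' i"] a_nonneg
    by (simp add: abs_mult)
  also have "\<bar>\<beta> i\<bar> * \<bar>I' - I\<bar> * \<bar>S' i\<bar> \<le> \<beta> n * \<bar>I' - I\<bar> * \<bar>S' i\<bar>"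
    using \<beta>_bounds[OF i_le] \<beta>_0_nonneg by (intro mult_right_mono) auto
  finally show ?thesis unfolding a_def by simp
qed

lemma chain_balance_diff_bound:
  assumes S: "chain_balance S I" and S': "chain_balance S' I'" and I: "0 \<le> I"
  shows "\<mu> * mid_sum (\<lambda>i. \<bar>S' i - S i\<bar>) + \<bar>inflow S' - inflow S\<bar>
    \<le> \<delta> * \<bar>S' 0 - S 0\<bar> + \<beta> n * \<bar>I' - I\<bar> * mid_sum (\<lambda>i. \<bar>S' i\<bar>)"
proof -
  define a where "a i = (1 - p i) * \<delta>" for i
  define x where "x i = \<bar>S' i - S i\<bar>" for i
  have "\<mu> * (\<Sum>i=1..n-1. x i) + a (n - 1) * x (n - 1)
      \<le> a 0 * x 0 + (\<Sum>i=1..n-1. \<beta> n * \<bar>I' - I\<bar> * \<bar>S' i\<bar>)"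
    by (rule chain_step_sum_le) (use chain_balance_diff_step[OF S S' I] in \<open>simp add: a_def x_def\<close>)
  moreover have "{1..n-1} = {1..<n}" using n_pos by auto
  moreover have "a 0 = \<delta>" unfolding a_def using p_0 by simp
  moreover have "a (n - 1) * x (n - 1) = \<bar>inflow S' - inflow S\<bar>"
  proof -
    have "0 \<le> a (n - 1)" using waning_nonneg[of "n - 1"] unfolding a_def by simp
    then have "a (n - 1) * x (n - 1) = \<bar>a (n - 1) * (S' (n - 1) - S (n - 1))\<bar>"
      unfolding x_def by (simp add: abs_mult)
    then show ?thesis unfolding inflow_def a_def by (simp add: right_diff_distrib)
  qed
  ultimately show ?thesis unfolding x_def by (simp add: sum_distrib_left)
qed

lemma chain_balance_bound:
  assumes "chain_balance S I" "0 \<le> I"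
  shows "\<mu> * mid_sum (\<lambda>i. \<bar>S i\<bar>) + \<bar>inflow S\<bar> \<le> \<delta> * \<bar>S 0\<bar>"
  \<comment> \<open>compare with the zero state, which satisfies the chain equations\<close>
  using chain_balance_diff_bound[of "\<lambda>_. 0" I S I] assms
  unfolding chain_balance_def inflow_def by simp

lemma class_balance_sums:
  assumes bal: "class_balance S I" and I: "0 \<le> I"
  shows "S 0 + mid_sum S + S n = 1 - I" and "S n = (\<mu> + inflow S) / denom I"
proof -
  show "S 0 + mid_sum S + S n = 1 - I"
    using bal sum_atMost_split_ends[OF n_pos, of S] unfolding class_balance_def by simp
  have "\<mu> - p n * \<omega> * S n + (1 - p (n - 1)) * \<delta> * S (n - 1) - \<beta> n * I * S n - \<mu> * S n = 0"
    using bal unfolding class_balance_def by blast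
  then have "S n * denom I = \<mu> + inflow S"
    unfolding denom_def inflow_def by algebra
  then show "S n = (\<mu> + inflow S) / denom I"
    using denom_pos[OF I] by (simp add: eq_divide_eq)
qed

lemma class_balance_mid_small:
  assumes bal: "class_balance S I" and I: "0 \<le> I" "I \<le> 1"
  shows "\<mu> * mid_sum (\<lambda>i. \<bar>S i\<bar>) + \<bar>inflow S\<bar> \<le> 2 * \<delta>"
proof -
  define A where "A = mid_sum (\<lambda>i. \<bar>S i\<bar>)"
  have chain: "\<mu> * A + \<bar>inflow S\<bar> \<le> \<delta> * \<bar>S 0\<bar>"
    using chain_balance_bound bal I unfolding class_balance_def A_def by blast
  have S0: "S 0 = (1 - I - \<mu> / denom I) - mid_sum S - inflow S / denom I"
    using class_balance_sums[OF bal I(1)] by (simp add: add_divide_distrib)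
  have "0 \<le> \<mu> / denom I" "\<mu> / denom I \<le> 1"
    using denom_ge[OF I(1)] denom_pos[OF I(1)] \<mu>_pos by simp_all
  then have "\<bar>1 - I - \<mu> / denom I\<bar> \<le> 1" using I by linarith
  moreover have "\<bar>mid_sum S\<bar> \<le> A" unfolding A_def by (rule sum_abs)
  moreover have "\<bar>inflow S / denom I\<bar> \<le> \<bar>inflow S\<bar> / \<mu>" by (rule abs_divide_denom_le[OF I(1)])
  ultimately have "\<bar>S 0\<bar> \<le> 1 + A + \<bar>inflow S\<bar> / \<mu>"
    unfolding S0 by linarith
  then have "\<mu> * \<bar>S 0\<bar> \<le> \<mu> + (\<mu> * A + \<bar>inflow S\<bar>)"
    using \<mu>_pos by (simp add: field_simps)
  also have "\<dots> \<le> \<mu> + \<mu> / 4 * \<bar>S 0\<bar>"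
    using chain mult_right_mono[OF \<delta>_small abs_ge_zero[of "S 0"]] by linarith
  finally have "\<mu> * (3 * \<bar>S 0\<bar>) \<le> \<mu> * 4" by simp
  then have "\<bar>S 0\<bar> \<le> 2" using \<mu>_pos mult_left_le_imp_le by fastforce
  then have "\<delta> * \<bar>S 0\<bar> \<le> \<delta> * 2" by (rule mult_left_mono[OF _ \<delta>_nonneg])
  then show ?thesis using chain unfolding A_def by linarith
qed

lemma class_balance_inflow_small:
  assumes "class_balance S I" "0 \<le> I" "I \<le> 1"
  shows "\<bar>inflow S\<bar> \<le> 2 * \<delta>"
proof -
  have "0 \<le> \<mu> * mid_sum (\<lambda>i. \<bar>S i\<bar>)"
    using \<mu>_pos by (simp add: sum_nonneg)
  then show ?thesis using class_balance_mid_small[OF assms] by linarith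
qed

section \<open>Deviation of the force of infection from its limit\<close>

lemma force_deviation:
  assumes bal: "class_balance S I" and I: "0 \<le> I"
  shows "force S - limit_force I
    = mid_sum (\<lambda>i. (\<beta> i - \<beta> 0) * S i) + (\<beta> n - \<beta> 0) * inflow S / denom I"
proof -
  have total: "(\<Sum>i\<le>n. S i) = 1 - I" using bal unfolding class_balance_def by simp
  show ?thesis
    unfolding force_split total class_balance_sums(2)[OF bal I] limit_force_def
    by (simp add: add_divide_distrib algebra_simps)
qed

lemma force_near_limit:
  assumes bal: "class_balance S I" and I: "0 \<le> I" "I \<le> 1"
  shows "\<bar>force S - limit_force I\<bar> \<le> 2 * \<beta> n * \<delta> / \<mu>"
proof -
  have "\<bar>(\<beta> n - \<beta> 0) * inflow S / denom I\<bar> = (\<beta> n - \<beta> 0) * \<bar>inflow S / denom I\<bar>"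
    using \<beta>_0_less by (simp add: abs_mult)
  also have "\<dots> \<le> \<beta> n * (\<bar>inflow S\<bar> / \<mu>)"
    using abs_divide_denom_le[OF I(1)] \<beta>_0_nonneg \<beta>_0_less by (intro mult_mono) auto
  finally have "\<bar>force S - limit_force I\<bar> \<le> \<beta> n * mid_sum (\<lambda>i. \<bar>S i\<bar>) + \<beta> n * (\<bar>inflow S\<bar> / \<mu>)"
    unfolding force_deviation[OF bal I(1)]
    by (rule order_trans[OF abs_triangle_ineq add_mono[OF mid_sum_weighted_le]])
  also have "\<dots> = \<beta> n * (\<mu> * mid_sum (\<lambda>i. \<bar>S i\<bar>) + \<bar>inflow S\<bar>) / \<mu>"
    using \<mu>_pos by (simp add: field_simps)
  also have "\<dots> \<le> \<beta> n * (2 * \<delta>) / \<mu>"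
    using class_balance_mid_small[OF bal I] \<beta>_n_pos \<mu>_pos
    by (intro divide_right_mono mult_left_mono) auto
  finally show ?thesis by (simp add: mult_ac)
qed

lemma class_balance_last_diff:
  assumes bal: "class_balance S I" "class_balance S' I'"
    and I: "0 \<le> I" "I \<le> 1" "0 \<le> I'"
  shows "\<mu> * \<bar>S' n - S n\<bar> \<le> \<bar>inflow S' - inflow S\<bar> + 3 / 2 * \<beta> n * \<bar>I' - I\<bar>"
proof -
  have Sn: "S n * denom I = \<mu> + inflow S" "S' n * denom I' = \<mu> + inflow S'"
    using class_balance_sums(2)[OF bal(1) I(1)] class_balance_sums(2)[OF bal(2) I(3)]
      denom_pos[OF I(1)] denom_pos[OF I(3)] by simp_all
  then have diff: "denom I' * (S' n - S n) = (inflow S' - inflow S) - S n * \<beta> n * (I' - I)"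
    unfolding denom_def by algebra
  have "\<bar>inflow S\<bar> \<le> \<mu> / 2"
    using class_balance_inflow_small[OF bal(1) I(1,2)] \<delta>_small by linarith
  have "\<bar>S n\<bar> * denom I = \<bar>\<mu> + inflow S\<bar>"
    using Sn(1) denom_pos[OF I(1)] by (metis abs_mult abs_of_pos)
  also have "\<dots> \<le> 3 / 2 * denom I"
    using \<open>\<bar>inflow S\<bar> \<le> \<mu> / 2\<close> denom_ge[OF I(1)] \<mu>_pos by linarith
  finally have Sn_le: "\<bar>S n\<bar> \<le> 3 / 2"
    using mult_le_cancel_right_pos[OF denom_pos[OF I(1)]] by blast
  have "\<mu> * \<bar>S' n - S n\<bar> \<le> denom I' * \<bar>S' n - S n\<bar>"
    using denom_ge[OF I(3)] by (simp add: mult_right_mono)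
  also have "\<dots> = \<bar>(inflow S' - inflow S) - S n * \<beta> n * (I' - I)\<bar>"
    using denom_pos[OF I(3)] unfolding diff[symmetric] by (metis abs_mult abs_of_pos)
  also have "\<dots> \<le> \<bar>inflow S' - inflow S\<bar> + \<bar>S n\<bar> * \<beta> n * \<bar>I' - I\<bar>"
    using abs_triangle_ineq4[of "inflow S' - inflow S" "S n * \<beta> n * (I' - I)"] \<beta>_n_pos
    by (simp add: abs_mult)
  also have "\<bar>S n\<bar> * \<beta> n * \<bar>I' - I\<bar> \<le> 3 / 2 * \<beta> n * \<bar>I' - I\<bar>"
    using Sn_le \<beta>_n_pos by (intro mult_right_mono) auto
  finally show ?thesis by simp
qed

lemma class_balance_first_diff:
  assumes bal: "class_balance S I" "class_balance S' I'"
    and I: "0 \<le> I" "I \<le> 1" "0 \<le> I'"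
  shows "\<mu> * \<bar>S' 0 - S 0\<bar> \<le> \<mu> * mid_sum (\<lambda>i. \<bar>S' i - S i\<bar>) + \<bar>inflow S' - inflow S\<bar>
    + (\<mu> + 3 / 2 * \<beta> n) * \<bar>I' - I\<bar>"
proof -
  have "\<bar>mid_sum S' - mid_sum S\<bar> \<le> mid_sum (\<lambda>i. \<bar>S' i - S i\<bar>)"
    unfolding sum_subtractf[symmetric] by (rule sum_abs)
  moreover have "S' 0 - S 0 = - (I' - I) - (mid_sum S' - mid_sum S) - (S' n - S n)"
    using class_balance_sums(1)[OF bal(1) I(1)] class_balance_sums(1)[OF bal(2) I(3)] by linarith
  ultimately have "\<bar>S' 0 - S 0\<bar> \<le> \<bar>I' - I\<bar> + mid_sum (\<lambda>i. \<bar>S' i - S i\<bar>) + \<bar>S' n - S n\<bar>"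
    by linarith
  then have "\<mu> * \<bar>S' 0 - S 0\<bar>
      \<le> \<mu> * \<bar>I' - I\<bar> + \<mu> * mid_sum (\<lambda>i. \<bar>S' i - S i\<bar>) + \<mu> * \<bar>S' n - S n\<bar>"
    using mult_left_mono[OF _ less_imp_le[OF \<mu>_pos]] by (fastforce simp: distrib_left)
  then show ?thesis
    using class_balance_last_diff[OF bal I] by (simp add: algebra_simps)
qed

lemma class_balance_diff_bound:
  assumes bal: "class_balance S I" "class_balance S' I'"
    and I: "0 \<le> I" "I \<le> 1" "0 \<le> I'" "I' \<le> 1"
  shows "\<mu> * mid_sum (\<lambda>i. \<bar>S' i - S i\<bar>) + \<bar>inflow S' - inflow S\<bar>
    \<le> \<delta> * (2 + 5 * \<beta> n / \<mu>) * \<bar>I' - I\<bar>"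
proof -
  define X where "X = \<mu> * mid_sum (\<lambda>i. \<bar>S' i - S i\<bar>) + \<bar>inflow S' - inflow S\<bar>"
  define dI where "dI = \<bar>I' - I\<bar>"
  define A' where "A' = mid_sum (\<lambda>i. \<bar>S' i\<bar>)"
  have X_nonneg: "0 \<le> X" unfolding X_def using \<mu>_pos by (simp add: sum_nonneg)
  have chain: "X \<le> \<delta> * \<bar>S' 0 - S 0\<bar> + \<beta> n * dI * A'"
    using chain_balance_diff_bound bal I(1) unfolding class_balance_def X_def dI_def A'_def
    by blast
  have A': "\<mu> * A' \<le> 2 * \<delta>"
    using class_balance_mid_small[OF bal(2) I(3,4)] unfolding A'_def by linarith
  have S0: "\<mu> * \<bar>S' 0 - S 0\<bar> \<le> X + (\<mu> + 3 / 2 * \<beta> n) * dI"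
    using class_balance_first_diff[OF bal I(1-3)] unfolding X_def dI_def .
  have "\<mu> * X \<le> \<delta> * (\<mu> * \<bar>S' 0 - S 0\<bar>) + \<beta> n * dI * (\<mu> * A')"
    using mult_left_mono[OF chain, of \<mu>] \<mu>_pos by (simp add: algebra_simps)
  also have "\<dots> \<le> \<delta> * (X + (\<mu> + 3 / 2 * \<beta> n) * dI) + \<beta> n * dI * (2 * \<delta>)"
    using S0 A' \<delta>_nonneg \<beta>_n_pos unfolding dI_def by (intro add_mono mult_left_mono) auto
  also have "\<delta> * X \<le> \<mu> / 4 * X"
    using \<delta>_small X_nonneg by (rule mult_right_mono)
  then have "\<delta> * (X + (\<mu> + 3 / 2 * \<beta> n) * dI) + \<beta> n * dI * (2 * \<delta>)
      \<le> \<mu> / 4 * X + \<delta> * dI * (\<mu> + 7 / 2 * \<beta> n)"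
    by (simp add: algebra_simps)
  finally have "\<mu> * X \<le> \<delta> * dI * (4 / 3 * \<mu> + 14 / 3 * \<beta> n)"
    by (simp add: algebra_simps)
  also have "\<dots> \<le> \<delta> * dI * (2 * \<mu> + 5 * \<beta> n)"
    using \<delta>_nonneg \<mu>_pos \<beta>_n_pos unfolding dI_def by (intro mult_left_mono) auto
  also have "\<dots> = \<mu> * (\<delta> * (2 + 5 * \<beta> n / \<mu>) * dI)"
    using \<mu>_pos by (simp add: field_simps)
  finally show ?thesis using \<mu>_pos unfolding X_def dI_def by simp
qed

lemma inflow_quotient_diff_le:
  assumes bal: "class_balance S I" and I: "0 \<le> I" "I \<le> 1" "0 \<le> I'"
  shows "\<bar>inflow S' / denom I' - inflow S / denom I\<bar>
    \<le> \<bar>inflow S' - inflow S\<bar> / \<mu> + 2 * \<delta> * \<beta> n * \<bar>I' - I\<bar> / \<mu>\<^sup>2"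
proof -
  have "inflow S' / denom I' - inflow S / denom I
      = (inflow S' - inflow S) / denom I' - inflow S * \<beta> n * (I' - I) / (denom I * denom I')"
    using divide_denom_diff[OF I(1,3), of "inflow S"] by (simp add: diff_divide_distrib)
  moreover have "\<bar>(inflow S' - inflow S) / denom I'\<bar> \<le> \<bar>inflow S' - inflow S\<bar> / \<mu>"
    by (rule abs_divide_denom_le[OF I(3)])
  moreover have "\<mu>\<^sup>2 \<le> denom I * denom I'"
    using denom_ge[OF I(1)] denom_ge[OF I(3)] \<mu>_pos unfolding power2_eq_square
    by (intro mult_mono) auto
  then have "\<bar>inflow S * \<beta> n * (I' - I) / (denom I * denom I')\<bar> \<le> 2 * \<delta> * \<beta> n * \<bar>I' - I\<bar> / \<mu>\<^sup>2"
    using class_balance_inflow_small[OF bal I(1,2)] \<beta>_n_pos \<mu>_pos \<delta>_nonneg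
      denom_pos[OF I(1)] denom_pos[OF I(3)]
    by (simp add: abs_mult frac_le mult_right_mono)
  ultimately show ?thesis by (smt (verit) abs_triangle_ineq4)
qed

lemma force_deviation_lipschitz:
  assumes bal: "class_balance S I" "class_balance S' I'"
    and I: "0 \<le> I" "I \<le> 1" "0 \<le> I'" "I' \<le> 1"
  shows "\<bar>(force S' - limit_force I') - (force S - limit_force I)\<bar> \<le> \<delta> * deviation_lip * \<bar>I' - I\<bar>"
proof -
  define Z where "Z = mid_sum (\<lambda>i. \<bar>S' i - S i\<bar>)"
  define W where "W = \<bar>inflow S' - inflow S\<bar>"
  define dI where "dI = \<bar>I' - I\<bar>"
  have "mid_sum (\<lambda>i. (\<beta> i - \<beta> 0) * S' i) - mid_sum (\<lambda>i. (\<beta> i - \<beta> 0) * S i)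
      = mid_sum (\<lambda>i. (\<beta> i - \<beta> 0) * (S' i - S i))"
    by (simp add: sum_subtractf[symmetric] right_diff_distrib)
  then have dev: "(force S' - limit_force I') - (force S - limit_force I)
      = mid_sum (\<lambda>i. (\<beta> i - \<beta> 0) * (S' i - S i))
        + (\<beta> n - \<beta> 0) * (inflow S' / denom I' - inflow S / denom I)"
    unfolding force_deviation[OF bal(1) I(1)] force_deviation[OF bal(2) I(3)]
    by (simp add: right_diff_distrib; linarith)
  have "\<bar>(\<beta> n - \<beta> 0) * (inflow S' / denom I' - inflow S / denom I)\<bar>
      \<le> \<beta> n * (W / \<mu> + 2 * \<delta> * \<beta> n * dI / \<mu>\<^sup>2)"
    using inflow_quotient_diff_le[OF bal(1) I(1-3)] \<beta>_0_nonneg \<beta>_0_less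
    unfolding abs_mult W_def dI_def by (intro mult_mono) auto
  then have "\<bar>(force S' - limit_force I') - (force S - limit_force I)\<bar>
      \<le> \<beta> n * Z + \<beta> n * (W / \<mu> + 2 * \<delta> * \<beta> n * dI / \<mu>\<^sup>2)"
    unfolding dev Z_def by (rule order_trans[OF abs_triangle_ineq add_mono[OF mid_sum_weighted_le]])
  also have "\<dots> = \<beta> n / \<mu> * (\<mu> * Z + W) + 2 * \<delta> * (\<beta> n)\<^sup>2 * dI / \<mu>\<^sup>2"
    using \<mu>_pos by (simp add: field_simps power2_eq_square)
  also have "\<dots> \<le> \<beta> n / \<mu> * (\<delta> * (2 + 5 * \<beta> n / \<mu>) * dI) + 2 * \<delta> * (\<beta> n)\<^sup>2 * dI / \<mu>\<^sup>2"
    using class_balance_diff_bound[OF bal I] \<beta>_n_pos \<mu>_pos unfolding Z_def W_def dI_def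
    by (intro add_right_mono mult_left_mono) auto
  also have "\<dots> = \<delta> * deviation_lip * dI"
    unfolding deviation_lip_def using \<mu>_pos by (simp add: field_simps power2_eq_square)
  finally show ?thesis unfolding dI_def .
qed

lemma class_balance_unique:
  assumes bal: "class_balance S I" "class_balance S' I" and I: "0 \<le> I" "I \<le> 1"
  shows "\<forall>i\<le>n. S' i = S i"
proof -
  have bound: "\<mu> * mid_sum (\<lambda>i. \<bar>S' i - S i\<bar>) + \<bar>inflow S' - inflow S\<bar> \<le> 0"
    using class_balance_diff_bound[OF bal I I] by simp
  have "0 \<le> \<mu> * mid_sum (\<lambda>i. \<bar>S' i - S i\<bar>)" using \<mu>_pos by (simp add: sum_nonneg)
  then have "\<mu> * mid_sum (\<lambda>i. \<bar>S' i - S i\<bar>) = 0" and W: "inflow S' = inflow S"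
    using bound by linarith+
  then have Z: "mid_sum (\<lambda>i. \<bar>S' i - S i\<bar>) = 0" using \<mu>_pos by simp
  have mid: "S' i = S i" if "i \<in> {1..<n}" for i
    using Z that by (simp add: sum_nonneg_eq_0_iff)
  have last: "S' n = S n"
    using class_balance_sums(2)[OF bal(1) I(1)] class_balance_sums(2)[OF bal(2) I(1)] W by simp
  have "mid_sum S' = mid_sum S" using mid by (rule sum.cong[OF refl])
  then have first: "S' 0 = S 0"
    using class_balance_sums(1)[OF bal(1) I(1)] class_balance_sums(1)[OF bal(2) I(1)] last by simp
  show ?thesis
  proof (intro allI impI)
    fix i assume "i \<le> n"
    then consider "i = 0" | "i = n" | "i \<in> {1..<n}" by fastforce
    then show "S' i = S i" using first last mid by cases auto
  qed
qed

section \<open>The class-balanced state with given infection level\<close>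

text \<open>\<open>S\<^sub>i = S\<^sub>0 \<cdot> chain_coeff I i\<close> for \<open>i < n\<close>, \<open>S\<^sub>n\<close> is determined by its own equation and
  \<open>S\<^sub>0 = profile_base I\<close> by the normalization.\<close>

primrec chain_coeff :: "real \<Rightarrow> nat \<Rightarrow> real" where
  "chain_coeff I 0 = 1"
| "chain_coeff I (Suc i) = (1 - p i) * \<delta> * chain_coeff I i / exit_rate I (Suc i)"

definition profile_mass :: "real \<Rightarrow> real" where
  "profile_mass I = (\<Sum>i<n. chain_coeff I i) + (1 - p (n - 1)) * \<delta> * chain_coeff I (n - 1) / denom I"

definition profile_base :: "real \<Rightarrow> real" where
  "profile_base I = (1 - I - \<mu> / denom I) / profile_mass I"

definition profile :: "real \<Rightarrow> nat \<Rightarrow> real" where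
  "profile I i = (if i < n then profile_base I * chain_coeff I i
     else (\<mu> + (1 - p (n - 1)) * \<delta> * profile_base I * chain_coeff I (n - 1)) / denom I)"

lemma chain_coeff_nonneg: "0 \<le> I \<Longrightarrow> i \<le> n \<Longrightarrow> 0 \<le> chain_coeff I i"
proof (induction i)
  case (Suc i)
  then show ?case
    using waning_nonneg[of i] exit_rate_pos[of I "Suc i"] by simp
qed simp

lemma profile_mass_ge_1: "0 \<le> I \<Longrightarrow> 1 \<le> profile_mass I"
proof -
  assume I: "0 \<le> I"
  have "(\<Sum>i<n. chain_coeff I i) = chain_coeff I 0 + (\<Sum>i\<in>{1..<n}. chain_coeff I i)"
  proof -
    have "{..<n} = insert 0 {1..<n}" using n_pos by auto
    then show ?thesis by simp
  qed
  moreover have "0 \<le> (\<Sum>i\<in>{1..<n}. chain_coeff I i)"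
    using chain_coeff_nonneg[OF I] by (intro sum_nonneg) simp
  moreover have "0 \<le> (1 - p (n - 1)) * \<delta> * chain_coeff I (n - 1) / denom I"
    using waning_nonneg[of "n - 1"] chain_coeff_nonneg[OF I, of "n - 1"] denom_pos[OF I] by simp
  ultimately show ?thesis unfolding profile_mass_def by simp
qed

lemma class_balance_profile:
  assumes I: "0 \<le> I"
  shows "class_balance (profile I) I"
proof -
  define s where "s = profile_base I"
  define c where "c = chain_coeff I"
  have D: "denom I \<noteq> 0" using denom_pos[OF I] by simp
  have low: "profile I i = s * c i" if "i < n" for i
    using that unfolding profile_def s_def c_def by simp
  have top: "profile I n * denom I = \<mu> + (1 - p (n - 1)) * \<delta> * s * c (n - 1)"
    using D unfolding profile_def s_def c_def by simp
  have "(\<Sum>i\<le>n. profile I i) = s * (\<Sum>i<n. c i) + profile I n"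
    by (simp add: lessThan_Suc_atMost[symmetric] sum_distrib_left low)
  also have "\<dots> = s * profile_mass I + \<mu> / denom I"
    using top D unfolding profile_mass_def c_def by (simp add: field_simps)
  also have "s * profile_mass I = 1 - I - \<mu> / denom I"
    using profile_mass_ge_1[OF I] unfolding s_def profile_base_def by simp
  finally have total: "(\<Sum>i\<le>n. profile I i) + I = 1" by simp
  have "chain_balance (profile I) I"
    unfolding chain_balance_iff
  proof (intro allI impI)
    fix i assume i: "1 \<le> i \<and> i \<le> n - 1"
    then obtain j where j: "i = Suc j" by (cases i) auto
    have "Suc j \<le> n" using i j by simp
    then have "exit_rate I i * c i = (1 - p j) * \<delta> * c j"
      using exit_rate_pos[OF I] j unfolding c_def by (simp add: less_imp_neq[symmetric])
    moreover have "i < n" "i - 1 < n" using i n_pos by auto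
    ultimately show "exit_rate I i * profile I i = (1 - p (i - 1)) * \<delta> * profile I (i - 1)"
      using j low by simp
  qed
  moreover have "\<mu> - p n * \<omega> * profile I n + (1 - p (n - 1)) * \<delta> * profile I (n - 1)
      - \<beta> n * I * profile I n - \<mu> * profile I n = 0"
    using top low[of "n - 1"] n_pos unfolding denom_def by (simp add: algebra_simps)
  ultimately show ?thesis using total unfolding class_balance_def by blast
qed

lemma continuous_on_chain_coeff: "i \<le> n \<Longrightarrow> continuous_on {0..1} (\<lambda>I. chain_coeff I i)"
proof (induction i)
  case (Suc i)
  have "\<forall>I\<in>{0..1}. exit_rate I (Suc i) \<noteq> 0"
    using exit_rate_pos Suc.prems by (auto simp: less_imp_neq[symmetric])
  then show ?case
    using Suc by (auto intro!: continuous_intros simp: exit_rate_def)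
qed simp

lemma continuous_on_force_profile: "continuous_on {0..1} (\<lambda>I. force (profile I))"
proof -
  have D: "continuous_on {0..1} denom" "\<forall>I\<in>{0..1}. denom I \<noteq> 0"
    using denom_pos by (auto intro!: continuous_intros simp: denom_def[abs_def] less_imp_neq[symmetric])
  have c: "continuous_on {0..1} (\<lambda>I. chain_coeff I i)" if "i \<le> n" for i
    using continuous_on_chain_coeff that .
  have "continuous_on {0..1} profile_mass"
    unfolding profile_mass_def using c D n_pos by (auto intro!: continuous_intros)
  moreover have "\<forall>I\<in>{0..1}. profile_mass I \<noteq> 0"
    using profile_mass_ge_1 by fastforce
  ultimately have "continuous_on {0..1} profile_base"
    unfolding profile_base_def using D by (auto intro!: continuous_intros)
  then have "continuous_on {0..1} (\<lambda>I. profile I i)" if "i \<le> n" for i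
    unfolding profile_def using c D that by (cases "i < n") (auto intro!: continuous_intros)
  then show ?thesis unfolding force_def by (auto intro!: continuous_intros)
qed

section \<open>Endemic equilibria\<close>

lemma class_0_residual:
  assumes bal: "class_balance S I"
  shows "(\<Sum>i=1..n. p i * \<omega> * S i) - \<delta> * S 0 + r * I - \<beta> 0 * I * S 0 - \<mu> * S 0
    = (r + \<mu> - force S) * I"
proof -
  define g where "g i = (1 - p i) * \<delta> * S i" for i
  have "mid_sum (\<lambda>i. g (i - 1) - g i)
      = mid_sum (\<lambda>i. p i * \<omega> * S i + I * (\<beta> i * S i) + \<mu> * S i)"
  proof (rule sum.cong[OF refl])
    fix i assume "i \<in> {1..<n}"
    then have "- (p i * \<omega>) * S i + (1 - p (i - 1)) * \<delta> * S (i - 1) - (1 - p i) * \<delta> * S i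
        - \<beta> i * I * S i - \<mu> * S i = 0"
      using bal unfolding class_balance_def chain_balance_def by auto
    then show "g (i - 1) - g i = p i * \<omega> * S i + I * (\<beta> i * S i) + \<mu> * S i"
      unfolding g_def by algebra
  qed
  moreover have "mid_sum (\<lambda>i. g i - g (i - 1)) = g (n - 1) - g 0"
  proof -
    have "{1..<n} = {Suc 0..n - 1}" using n_pos by auto
    then show ?thesis using sum_telescope''[of 0 "n - 1" g] by simp
  qed
  moreover have "\<mu> - p n * \<omega> * S n + g (n - 1) - \<beta> n * I * S n - \<mu> * S n = 0"
    using bal unfolding class_balance_def g_def by blast
  moreover have "S 0 + mid_sum S + S n + I = 1"
    using bal sum_atMost_split_ends[OF n_pos, of S] unfolding class_balance_def by simp
  moreover have "(\<Sum>i=1..n. p i * \<omega> * S i) = mid_sum (\<lambda>i. p i * \<omega> * S i) + p n * \<omega> * S n"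
  proof -
    have "{1..n} = insert n {1..<n}" using n_pos by auto
    then show ?thesis by (simp add: add.commute)
  qed
  moreover have "force S = \<beta> 0 * S 0 + mid_sum (\<lambda>i. \<beta> i * S i) + \<beta> n * S n"
    unfolding force_def by (rule sum_atMost_split_ends[OF n_pos])
  moreover have "g 0 = \<delta> * S 0" unfolding g_def using p_0 by simp
  ultimately show ?thesis
    by (simp add: sum.distrib sum_subtractf sum_distrib_left[symmetric]) algebra
qed

lemma endemic_equilibrium_iff:
  "wi_endemic_equilibrium n \<delta> \<omega> r \<mu> p \<beta> S I \<longleftrightarrow> class_balance S I \<and> force S = r + \<mu> \<and> I \<noteq> 0"
proof
  assume "wi_endemic_equilibrium n \<delta> \<omega> r \<mu> p \<beta> S I"
  then have bal: "class_balance S I" and I: "I \<noteq> 0" and "I * force S - r * I - \<mu> * I = 0"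
    unfolding wi_endemic_equilibrium_def wi_equilibrium_def class_balance_def chain_balance_def
      force_def by auto
  then have "I * (force S - (r + \<mu>)) = 0" by (simp add: algebra_simps)
  then show "class_balance S I \<and> force S = r + \<mu> \<and> I \<noteq> 0" using bal I by simp
next
  assume asm: "class_balance S I \<and> force S = r + \<mu> \<and> I \<noteq> 0"
  then have "(\<Sum>i=1..n. p i * \<omega> * S i) - \<delta> * S 0 + r * I - \<beta> 0 * I * S 0 - \<mu> * S 0 = 0"
    using class_0_residual by simp
  moreover have "I * force S - r * I - \<mu> * I = 0" using asm by (simp add: algebra_simps)
  ultimately show "wi_endemic_equilibrium n \<delta> \<omega> r \<mu> p \<beta> S I"
    using asm unfolding wi_endemic_equilibrium_def wi_equilibrium_def class_balance_def
      chain_balance_def force_def by auto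
qed

lemma no_endemic_equilibrium:
  assumes "limit_force 0 + 2 * \<beta> n * \<delta> / \<mu> < r + \<mu>"
  shows "\<not> (\<exists>S I. wi_endemic_equilibrium n \<delta> \<omega> r \<mu> p \<beta> S I \<and> 0 < I \<and> I \<le> 1)"
proof
  assume "\<exists>S I. wi_endemic_equilibrium n \<delta> \<omega> r \<mu> p \<beta> S I \<and> 0 < I \<and> I \<le> 1"
  then obtain S I where bal: "class_balance S I" "force S = r + \<mu>" and I: "0 < I" "I \<le> 1"
    unfolding endemic_equilibrium_iff by blast
  have "force S \<le> limit_force I + 2 * \<beta> n * \<delta> / \<mu>"
    using force_near_limit[OF bal(1)] I by (simp add: abs_le_iff)
  moreover have "limit_force I \<le> limit_force 0" using limit_force_antimono I by simp
  ultimately show False using assms bal(2) by linarith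
qed

lemma endemic_equilibrium_exists:
  assumes "r + \<mu> < limit_force 0 - 2 * \<beta> n * \<delta> / \<mu>" and "2 * \<beta> n * \<delta> / \<mu> < r"
  shows "\<exists>S I. wi_endemic_equilibrium n \<delta> \<omega> r \<mu> p \<beta> S I \<and> 0 < I \<and> I \<le> 1"
proof -
  have at_0: "r + \<mu> < force (profile 0)"
    using force_near_limit[OF class_balance_profile, of 0] assms(1) by (simp add: abs_le_iff)
  have "force (profile 1) < r + \<mu>"
    using force_near_limit[OF class_balance_profile, of 1] limit_force_1_le assms(2)
    by (simp add: abs_le_iff)
  then obtain I where I: "0 \<le> I" "I \<le> 1" "force (profile I) = r + \<mu>"
    using IVT2'[of "\<lambda>I. force (profile I)" 1 "r + \<mu>" 0] at_0 continuous_on_force_profile by auto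
  moreover have "I \<noteq> 0" using I at_0 by auto
  ultimately show ?thesis
    using class_balance_profile endemic_equilibrium_iff by (metis less_eq_real_def)
qed

lemma endemic_equilibrium_unique:
  assumes small: "\<delta> * deviation_lip < limit_slope"
    and E: "wi_endemic_equilibrium n \<delta> \<omega> r \<mu> p \<beta> S I" "0 < I" "I \<le> 1"
    and E': "wi_endemic_equilibrium n \<delta> \<omega> r \<mu> p \<beta> S' I'" "0 < I'" "I' \<le> 1"
  shows "I' = I \<and> (\<forall>i\<le>n. S' i = S i)"
proof -
  have bal: "class_balance S I" "class_balance S' I'" and F: "force S = r + \<mu>" "force S' = r + \<mu>"
    using E(1) E'(1) unfolding endemic_equilibrium_iff by auto
  have I: "0 \<le> I" "I \<le> 1" "0 \<le> I'" "I' \<le> 1" using E E' by auto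
  have "limit_slope * \<bar>I' - I\<bar> \<le> \<bar>limit_force I' - limit_force I\<bar>"
    by (rule limit_force_slope[OF I])
  also have "\<dots> = \<bar>(force S' - limit_force I') - (force S - limit_force I)\<bar>"
    unfolding F by (simp add: abs_minus_commute)
  also have "\<dots> \<le> \<delta> * deviation_lip * \<bar>I' - I\<bar>"
    by (rule force_deviation_lipschitz[OF bal I])
  finally have "(limit_slope - \<delta> * deviation_lip) * \<bar>I' - I\<bar> \<le> 0"
    by (simp add: algebra_simps)
  then have "I' = I" using small by (simp add: mult_le_0_iff)
  then show ?thesis using class_balance_unique bal I by blast
qed

end

context wi_model
begin

lemma eventually_wi_small_waning:
  "\<forall>\<^sub>F \<delta> in nhds 0. 0 \<le> \<delta> \<longrightarrow> wi_small_waning n \<omega> r \<mu> p \<beta> \<delta>"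
proof -
  have "\<forall>\<^sub>F \<delta> in nhds 0. \<delta> * 1 < \<mu> / 4"
    using \<mu>_pos by (intro eventually_nhds_0_mult_less) simp
  then show ?thesis
    by (rule eventually_mono)
      (auto intro!: wi_small_waning.intro wi_small_waning_axioms.intro wi_model_axioms)
qed

lemma eventually_no_endemic_equilibrium:
  "\<forall>\<^sub>F \<delta> in nhds 0. 0 \<le> \<delta> \<longrightarrow> limit_force 0 < r + \<mu> \<longrightarrow>
    \<not> (\<exists>S I. wi_endemic_equilibrium n \<delta> \<omega> r \<mu> p \<beta> S I \<and> 0 < I \<and> I \<le> 1)"
proof (cases "limit_force 0 < r + \<mu>")
  case True
  have "\<forall>\<^sub>F \<delta> in nhds 0. \<delta> * (2 * \<beta> n / \<mu>) < r + \<mu> - limit_force 0"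
    using True by (intro eventually_nhds_0_mult_less) simp
  with eventually_wi_small_waning show ?thesis
  proof eventually_elim
    case (elim \<delta>)
    show ?case
    proof (intro impI)
      assume "0 \<le> \<delta>"
      then interpret wi_small_waning n \<omega> r \<mu> p \<beta> \<delta> using elim by simp
      show "\<not> (\<exists>S I. wi_endemic_equilibrium n \<delta> \<omega> r \<mu> p \<beta> S I \<and> 0 < I \<and> I \<le> 1)"
        using elim by (intro no_endemic_equilibrium) (simp add: field_simps)
    qed
  qed
qed simp

lemma eventually_unique_endemic_equilibrium:
  "\<forall>\<^sub>F \<delta> in nhds 0. 0 \<le> \<delta> \<longrightarrow> r + \<mu> < limit_force 0 \<longrightarrow>
    (\<exists>S I. wi_endemic_equilibrium n \<delta> \<omega> r \<mu> p \<beta> S I \<and> 0 < I \<and> I \<le> 1 \<and>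
       (\<forall>S' I'. wi_endemic_equilibrium n \<delta> \<omega> r \<mu> p \<beta> S' I' \<and> 0 < I' \<and> I' \<le> 1
          \<longrightarrow> I' = I \<and> (\<forall>i\<le>n. S' i = S i)))"
proof (cases "r + \<mu> < limit_force 0")
  case True
  have "\<forall>\<^sub>F \<delta> in nhds 0. \<delta> * (2 * \<beta> n / \<mu>) < limit_force 0 - (r + \<mu>)
      \<and> \<delta> * (2 * \<beta> n / \<mu>) < r \<and> \<delta> * deviation_lip < limit_slope"
    using True r_pos limit_slope_pos by (intro eventually_conj eventually_nhds_0_mult_less) simp_all
  with eventually_wi_small_waning show ?thesis
  proof eventually_elim
    case (elim \<delta>)
    show ?case
    proof (intro impI)
      assume "0 \<le> \<delta>"
      then interpret wi_small_waning n \<omega> r \<mu> p \<beta> \<delta> using elim by simp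
      obtain S I where "wi_endemic_equilibrium n \<delta> \<omega> r \<mu> p \<beta> S I" "0 < I" "I \<le> 1"
        using elim endemic_equilibrium_exists by (auto simp: field_simps)
      then show "\<exists>S I. wi_endemic_equilibrium n \<delta> \<omega> r \<mu> p \<beta> S I \<and> 0 < I \<and> I \<le> 1 \<and>
          (\<forall>S' I'. wi_endemic_equilibrium n \<delta> \<omega> r \<mu> p \<beta> S' I' \<and> 0 < I' \<and> I' \<le> 1
             \<longrightarrow> I' = I \<and> (\<forall>i\<le>n. S' i = S i))"
        using elim endemic_equilibrium_unique by blast
    qed
  qed
qed simp

end

theorem theorem3:
  fixes n :: nat and \<omega> r \<mu> :: real and p \<beta> :: "nat \<Rightarrow> real"
  assumes "n \<ge> 1" and "\<omega> \<ge> 0" and "r > 0" and "\<mu> > 0"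
    and "p 0 = 0" and "\<forall>i\<in>{1..n}. 0 \<le> p i \<and> p i \<le> 1"
    and "0 \<le> \<beta> 0" and "\<forall>i<n. \<beta> i \<le> \<beta> (Suc i)" and "\<beta> 0 < \<beta> n"
  shows "\<exists>\<delta>o>0. \<forall>\<delta>. 0 \<le> \<delta> \<and> \<delta> \<le> \<delta>o \<longrightarrow>
    ((p n * \<omega> + \<mu>) * (\<mu> + r) > \<beta> 0 * (p n * \<omega>) + \<beta> n * \<mu> \<longrightarrow>
       \<not> (\<exists>S I. wi_endemic_equilibrium n \<delta> \<omega> r \<mu> p \<beta> S I \<and> 0 < I \<and> I \<le> 1)) \<and>
    ((p n * \<omega> + \<mu>) * (\<mu> + r) < \<beta> 0 * (p n * \<omega>) + \<beta> n * \<mu> \<longrightarrow>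
       (\<exists>S I. wi_endemic_equilibrium n \<delta> \<omega> r \<mu> p \<beta> S I \<and> 0 < I \<and> I \<le> 1 \<and>
          (\<forall>S' I'. wi_endemic_equilibrium n \<delta> \<omega> r \<mu> p \<beta> S' I' \<and> 0 < I' \<and> I' \<le> 1
             \<longrightarrow> I' = I \<and> (\<forall>i\<le>n. S' i = S i))))"
proof -
  interpret wi_model n \<omega> r \<mu> p \<beta> using assms by unfold_locales
  show ?thesis unfolding threshold_iff
    by (rule eventually_nhds_0_imp_interval, rule eventually_mono[OF eventually_conj[OF
        eventually_no_endemic_equilibrium eventually_unique_endemic_equilibrium]]) blast
qed

end
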